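(* Let $n,k\ge 0$ be integers with expansions $(n)_{\mathbf F}=(n_0,n_1,n_2,\ldots)$ and $(k)_{\mathbf F}=(k_0,k_1,k_2,\ldots)$ in the base $\mathbf F$. Then $$\binom{n}{k}_F\equiv \binom{n_0}{k_0}_F\binom{n_1}{k_1}_F\binom{n_2}{k_2}_F\cdots \pmod 2$$ (the product is effectively finite since all but finitely many factors are $\binom{0}{0}_F=1$).
   Context: The Fibonacci numbers are defined by $F_0=0$, $F_1=1$, $F_n=F_{n-1}+F_{n-2}$ for $n\ge 2$. For $n\ge 0$ let $n!_F=F_1F_2\cdots F_n$ (with $0!_F=1$), and for $0\le k\le n$ define the Fibonomial coefficient $\binom{n}{k}_F=\dfrac{n!_F}{k!_F\,(n-k)!_F}$; by convention $\binom{n}{k}_F=0$ if $k<0$ or $k>n$. The base $\mathbf F$ is the sequence $(b_0,b_1,b_2,\ldots)=(1,3,3\cdot 2,3\cdot 2^2,\ldots)$, i.e. $b_0=1$ and $b_i=3\cdot 2^{i-1}$ for $i\ge 1$. Every integer $n\ge 0$ has a unique expansion $n=\sum_{i\ge 0} n_i b_i$ with $0\le n_i<b_{i+1}/b_i$ for all $i$ (so $0\le n_0\le 2$ and $n_i\in\{0,1\}$ for $i\ge 1$, with only finitely many nonzero digits); this digit sequence is denoted $(n)_{\mathbf F}=(n_0,n_1,n_2,\ldots)$. *)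

theory Defs
  imports "HOL-Number_Theory.Fib"
begin

definition fibfact :: "nat \<Rightarrow> nat" where
  "fibfact n = (\<Prod>i=1..n. fib i)"

text \<open>Fibonomial coefficient; the quotient is an integer, so nat division is exact.
  Zero outside 0 <= k <= n.\<close>
definition fibonomial :: "nat \<Rightarrow> nat \<Rightarrow> nat" where
  "fibonomial n k = (if k \<le> n then fibfact n div (fibfact k * fibfact (n - k)) else 0)"

definition baseF :: "nat \<Rightarrow> nat" where
  "baseF i = (if i = 0 then 1 else 3 * 2 ^ (i - 1))"

definition is_F_expansion :: "nat \<Rightarrow> (nat \<Rightarrow> nat) \<Rightarrow> bool" where
  "is_F_expansion n d \<longleftrightarrow>
     finite {i. d i \<noteq> 0} \<and>
     (\<forall>i. d i * baseF i < baseF (Suc i)) \<and>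
     n = (\<Sum>i\<in>{i. d i \<noteq> 0}. d i * baseF i)"

definition F_digits :: "nat \<Rightarrow> nat \<Rightarrow> nat" where
  "F_digits n = (THE d. is_F_expansion n d)"

end

theory Submission
  imports Defs "HOL-Number_Theory.Cong"
begin

text \<open>
  Fibonomials obey the Pascal-type rule
  \<open>[a+b+2, a+1]\<^sub>F = F\<^sub>a\<^sub>+\<^sub>2 [a+b+1, a+1]\<^sub>F + F\<^sub>b [a+b+1, a]\<^sub>F\<close>.
  As \<open>F\<^sub>m\<close> is even exactly when 3 divides \<open>m\<close>, this recurrence read modulo 2 is also satisfied by
  \<open>[k mod 3 \<le> n mod 3] \<cdot> C(n div 3, k div 3)\<close>, so \<open>[n, k]\<^sub>F\<close> is odd iff \<open>k mod 3 \<le> n mod 3\<close>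
  and \<open>C(n div 3, k div 3)\<close> is odd. By Lucas' theorem for the prime 2 the latter means that the
  binary digits of \<open>k div 3\<close> are dominated by those of \<open>n div 3\<close>. The base \<open>F\<close> digits of \<open>n\<close> are
  \<open>n mod 3\<close> followed by the binary digits of \<open>n div 3\<close>, and for digits \<open>\<le> 2\<close> the Fibonomial
  \<open>[n\<^sub>i, k\<^sub>i]\<^sub>F\<close> is just \<open>[k\<^sub>i \<le> n\<^sub>i]\<close>; hence both sides are odd exactly when every digit of \<open>k\<close>
  is at most the corresponding digit of \<open>n\<close>.
\<close>

lemma fibfact_Suc: "fibfact (Suc n) = fib (Suc n) * fibfact n"
  by (simp add: fibfact_def prod.nat_ivl_Suc')

lemma fibfact_pos: "fibfact n > 0"
  unfolding fibfact_def by (auto intro!: prod_pos fib_neq_0_nat)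

text \<open>\<open>fibonomial_pascal a b\<close> is \<open>[a+b, a]\<^sub>F\<close>; the recurrence comes from \<open>fib_add\<close>, and it shows
  that Fibonomials are integers.\<close>

fun fibonomial_pascal :: "nat \<Rightarrow> nat \<Rightarrow> nat" where
  "fibonomial_pascal 0 b = 1"
| "fibonomial_pascal (Suc a) 0 = 1"
| "fibonomial_pascal (Suc a) (Suc b) =
     fib (a + 2) * fibonomial_pascal (Suc a) b + fib b * fibonomial_pascal a (Suc b)"

lemma fibonomial_pascal_fibfact:
  "fibonomial_pascal a b * fibfact a * fibfact b = fibfact (a + b)"
proof (induction a b rule: fibonomial_pascal.induct)
  case (3 a b)
  have "fibonomial_pascal (Suc a) (Suc b) * fibfact (Suc a) * fibfact (Suc b)
      = fib (a + 2) * fib (Suc b) * (fibonomial_pascal (Suc a) b * fibfact (Suc a) * fibfact b)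
        + fib b * fib (Suc a) * (fibonomial_pascal a (Suc b) * fibfact a * fibfact (Suc b))"
    by (simp add: fibfact_Suc algebra_simps)
  also have "\<dots> = (fib (a + 2) * fib (Suc b) + fib b * fib (Suc a)) * fibfact (Suc (a + b))"
    using "3.IH" by (simp add: algebra_simps)
  also have "fib (a + 2) * fib (Suc b) + fib b * fib (Suc a) = fib (Suc (Suc (a + b)))"
    using fib_add[of "Suc a" b] by (simp add: algebra_simps)
  finally show ?case
    by (simp add: fibfact_Suc)
qed (simp_all add: fibfact_def)

lemma fibonomial_eq_pascal:
  assumes "k \<le> n"
  shows "fibonomial n k = fibonomial_pascal k (n - k)"
proof -
  have "fibfact n = fibonomial_pascal k (n - k) * (fibfact k * fibfact (n - k))"
    using fibonomial_pascal_fibfact[of k "n - k"] assms by (simp add: mult.assoc)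
  then show ?thesis
    using assms by (simp add: fibonomial_def fibfact_pos)
qed

lemma even_fib_iff: "even (fib n) \<longleftrightarrow> 3 dvd n"
  by (induction n rule: fib.induct) (simp_all, presburger)

lemma cong_fib_mod_2: "[fib n = of_bool (\<not> 3 dvd n)] (mod 2)"
  by (simp add: cong_def mod_2_eq_odd even_fib_iff)

text \<open>The predicted value of \<open>[a+b, a]\<^sub>F\<close> modulo 2: the last ternary digits of \<open>a\<close> and \<open>b\<close> must
  add without carry, and the remaining parts contribute an ordinary binomial coefficient.\<close>

definition fibonomial_lucas :: "nat \<Rightarrow> nat \<Rightarrow> nat" where
  "fibonomial_lucas a b = of_bool (a mod 3 + b mod 3 < 3) * (a div 3 + b div 3 choose a div 3)"

lemma fibonomial_lucas_pascal:
  "[of_bool (\<not> 3 dvd (a + 2)) * fibonomial_lucas (Suc a) b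
      + of_bool (\<not> 3 dvd b) * fibonomial_lucas a (Suc b)
    = fibonomial_lucas (Suc a) (Suc b)] (mod 2)"
proof -
  \<comment> \<open>In each of the nine cases for \<open>a mod 3\<close> and \<open>b mod 3\<close> the claim is trivial or is
    Pascal's rule for ordinary binomial coefficients.\<close>
  obtain p r q s where a: "a = 3 * p + r" "r < 3" and b: "b = 3 * q + s" "s < 3"
    by (metis div_mult_mod_eq mod_less_divisor zero_less_numeral mult.commute)
  have residues: "Suc (3*x) div 3 = x" "Suc (Suc (3*x)) div 3 = x" "Suc (Suc (Suc (3*x))) div 3 = Suc x"
    "Suc (Suc (Suc (Suc (3*x)))) div 3 = Suc x"
    "Suc (3*x) mod 3 = 1" "Suc (Suc (3*x)) mod 3 = 2" "Suc (Suc (Suc (3*x))) mod 3 = 0"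
    "\<not> 3 dvd Suc (3*x)" "\<not> 3 dvd Suc (Suc (3*x))" "3 dvd Suc (Suc (Suc (3*x)))"
    "\<not> 3 dvd Suc (Suc (Suc (Suc (3*x))))" for x :: nat
    by presburger+
  from a b have "r \<in> {0, 1, 2}" "s \<in> {0, 1, 2}"
    by auto
  then show ?thesis
    using a b by (auto simp: fibonomial_lucas_def residues cong_def add_ac)
qed

lemma cong_fibonomial_pascal_lucas: "[fibonomial_pascal a b = fibonomial_lucas a b] (mod 2)"
proof (induction a b rule: fibonomial_pascal.induct)
  case (3 a b)
  have "[fibonomial_pascal (Suc a) (Suc b)
      = of_bool (\<not> 3 dvd (a + 2)) * fibonomial_lucas (Suc a) b
        + of_bool (\<not> 3 dvd b) * fibonomial_lucas a (Suc b)] (mod 2)"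
    unfolding fibonomial_pascal.simps
    by (intro cong_add cong_mult cong_fib_mod_2 "3.IH")
  then show ?case
    using fibonomial_lucas_pascal cong_trans by blast
qed (simp_all add: fibonomial_lucas_def)

lemma binomial_0_left: "0 choose k = of_bool (k = 0)"
  by (cases k) simp_all

lemma cong_2_odd_iff: "[a = b] (mod 2) \<Longrightarrow> odd a \<longleftrightarrow> odd b" for a b :: nat
  by (simp add: cong_def odd_iff_mod_2_eq_one)

lemma cong_binomial_half:
  "[m choose j = (m div 2 choose j div 2) * (m mod 2 choose j mod 2)] (mod 2)"
proof (induction m arbitrary: j rule: nat_induct2)
  case 0
  have "j = 0 \<longleftrightarrow> j div 2 = 0 \<and> j mod 2 = 0"
    by presburger
  then show ?case
    by (simp add: binomial_0_left)
next
  case 1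
  consider "j = 0" | "j = 1" | "1 < j"
    by linarith
  then show ?case
    by cases (simp_all add: binomial_eq_0 binomial_0_left div_eq_0_iff)
next
  case (step m)
  consider "j = 0" | "j = 1" | i where "j = i + 2"
    by (metis add_2_eq_Suc' not0_implies_Suc One_nat_def)
  then show ?case
  proof cases
    case 1
    then show ?thesis by simp
  next
    case 2
    then show ?thesis by (simp add: cong_def)
  next
    case 3
    have "m + 2 choose i + 2 = (m choose i) + (m choose i + 2) + 2 * (m choose Suc i)"
      by (simp add: numeral_2_eq_2)
    then have "[m + 2 choose i + 2 = (m choose i) + (m choose i + 2)] (mod 2)"
      by (simp only: cong_def mod_mult_self2)
    also have "[(m choose i) + (m choose i + 2)
        = (m div 2 choose i div 2) * (m mod 2 choose i mod 2)
          + (m div 2 choose Suc (i div 2)) * (m mod 2 choose i mod 2)] (mod 2)"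
      using step.IH[of i] step.IH[of "i + 2"] by (simp add: cong_add)
    also have "(m div 2 choose i div 2) * (m mod 2 choose i mod 2)
          + (m div 2 choose Suc (i div 2)) * (m mod 2 choose i mod 2)
        = ((m + 2) div 2 choose j div 2) * ((m + 2) mod 2 choose j mod 2)"
      using 3 by (simp add: algebra_simps)
    finally show ?thesis
      using 3 by simp
  qed
qed

lemma odd_binomial_iff: "odd (m choose j) \<longleftrightarrow> (\<forall>i. bit j i \<longrightarrow> bit m i)"
proof (induction m arbitrary: j rule: less_induct)
  case (less m)
  show ?case
  proof (cases "m = 0")
    case True
    then show ?thesis
      using bit_eq_iff[of j 0] by (auto simp: binomial_0_left)
  next
    case False
    have "odd (m choose j) \<longleftrightarrow> odd (m div 2 choose j div 2) \<and> odd (m mod 2 choose j mod 2)"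
      using cong_2_odd_iff[OF cong_binomial_half[of m j]] by simp
    also have "\<dots> \<longleftrightarrow> (\<forall>i. bit j (Suc i) \<longrightarrow> bit m (Suc i)) \<and> (bit j 0 \<longrightarrow> bit m 0)"
      using less[of "m div 2"] False by (auto simp: bit_Suc bit_0 mod_2_eq_odd)
    also have "\<dots> \<longleftrightarrow> (\<forall>i. bit j i \<longrightarrow> bit m i)"
      by (metis not0_implies_Suc)
    finally show ?thesis .
  qed
qed

lemma bit_sum_binary_digits:
  fixes b :: "nat \<Rightarrow> nat"
  assumes "\<And>i. i < N \<Longrightarrow> b i \<le> 1"
  shows "bit (\<Sum>i<N. b i * 2 ^ i) j \<longleftrightarrow> j < N \<and> b j = 1"
proof -
  have "b i * 2 ^ i = of_bool (b i = 1) * 2 ^ i" if "i < N" for i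
    using assms[OF that] by (cases "b i") auto
  then have "(\<Sum>i<N. b i * 2 ^ i) = horner_sum of_bool 2 (map (\<lambda>i. b i = 1) [0..<N])"
    by (simp add: horner_sum_eq_sum atLeast0LessThan)
  then show ?thesis
    by (auto simp: bit_horner_sum_bit_iff)
qed

lemma sum_binary_digits: "m < 2 ^ N \<Longrightarrow> (\<Sum>i<N. of_bool (bit m i) * 2 ^ i) = m"
  for m :: nat
  using take_bit_sum[of N m] take_bit_nat_eq_self[of m N]
  by (simp add: push_bit_eq_mult atLeast0LessThan)

lemma bit_imp_less: "bit m i \<Longrightarrow> i < m"
  for m :: nat
  by (metis bit_iff_odd div_less dual_order.strict_trans1 even_zero less_exp not_less)

fun F_digit :: "nat \<Rightarrow> nat \<Rightarrow> nat" where
  "F_digit n 0 = n mod 3"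
| "F_digit n (Suc i) = of_bool (bit (n div 3) i)"

lemma sum_F_expansion:
  assumes "{i. d i \<noteq> 0} \<subseteq> {..N}"
  shows "(\<Sum>i\<in>{i. d i \<noteq> 0}. d i * baseF i) = d 0 + 3 * (\<Sum>i<N. d (Suc i) * 2 ^ i)"
proof -
  have "(\<Sum>i\<in>{i. d i \<noteq> 0}. d i * baseF i) = (\<Sum>i<Suc N. d i * baseF i)"
    by (rule sum.mono_neutral_left) (use assms in auto)
  also have "\<dots> = d 0 + 3 * (\<Sum>i<N. d (Suc i) * 2 ^ i)"
    by (subst sum.lessThan_Suc_shift) (simp add: baseF_def sum_distrib_left mult_ac)
  finally show ?thesis .
qed

lemma F_digit_support: "{i. F_digit n i \<noteq> 0} \<subseteq> {..n}"
proof
  fix i assume "i \<in> {i. F_digit n i \<noteq> 0}"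
  then show "i \<in> {..n}"
    by (cases i) (auto dest!: bit_imp_less)
qed

lemma is_F_expansion_F_digit: "is_F_expansion n (F_digit n)"
proof -
  have digit_bound: "F_digit n i * baseF i < baseF (Suc i)" for i
    by (cases i) (auto simp: baseF_def)
  have "n div 3 < 2 ^ n"
    using less_exp[of n] div_le_dividend le_less_trans by blast
  then have "(\<Sum>i<n. F_digit n (Suc i) * 2 ^ i) = n div 3"
    using sum_binary_digits by simp
  then have sum: "(\<Sum>i\<in>{i. F_digit n i \<noteq> 0}. F_digit n i * baseF i) = n"
    by (simp only: sum_F_expansion[OF F_digit_support] F_digit.simps(1) mod_mult_div_eq)
  have "finite {i. F_digit n i \<noteq> 0}"
    using F_digit_support finite_subset by blast
  with digit_bound sum show ?thesis
    unfolding is_F_expansion_def by (intro conjI allI) simp_all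
qed

lemma is_F_expansion_unique:
  assumes "is_F_expansion n d"
  shows "d = F_digit n"
proof
  from assms have fin: "finite {i. d i \<noteq> 0}" and bound: "\<And>i. d i * baseF i < baseF (Suc i)"
    and n: "n = (\<Sum>i\<in>{i. d i \<noteq> 0}. d i * baseF i)"
    unfolding is_F_expansion_def by auto
  obtain N where N: "{i. d i \<noteq> 0} \<subseteq> {..N}"
    using fin by (meson atMost_iff finite_nat_set_iff_bounded_le subsetI)
  have d0: "d 0 < 3" and dSuc: "d (Suc i) \<le> 1" for i
    using bound[of 0] bound[of "Suc i"] by (simp_all add: baseF_def)
  have n: "n = d 0 + 3 * (\<Sum>i<N. d (Suc i) * 2 ^ i)"
    using n by (simp only: sum_F_expansion[OF N])
  fix i show "d i = F_digit n i"
  proof (cases i)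
    case 0
    then show ?thesis using n d0 by simp
  next
    case (Suc j)
    have "n div 3 = (\<Sum>i<N. d (Suc i) * 2 ^ i)"
      using n d0 by simp
    then have "bit (n div 3) j \<longleftrightarrow> j < N \<and> d (Suc j) = 1"
      using bit_sum_binary_digits[of N "\<lambda>i. d (Suc i)"] dSuc by simp
    moreover have "d (Suc j) = 0" if "N \<le> j"
      using N that by auto
    ultimately show ?thesis
      using Suc dSuc[of j] by (cases "d (Suc j) = 1") auto
  qed
qed

lemma F_digits_eq_F_digit: "F_digits n = F_digit n"
  unfolding F_digits_def
  using is_F_expansion_F_digit is_F_expansion_unique by blast

lemma fibonomial_lucas_altdef:
  "fibonomial_lucas a b = of_bool (a mod 3 \<le> (a + b) mod 3) * ((a + b) div 3 choose a div 3)"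
proof (cases "a mod 3 + b mod 3 < 3")
  case True
  then have "(a + b) mod 3 = a mod 3 + b mod 3"
    unfolding mod_add_eq[symmetric, of a b 3] by (rule mod_less)
  moreover have "(a + b) div 3 = a div 3 + b div 3"
    unfolding div_add1_eq[of a b] using True by (simp only: div_less add_0_right)
  ultimately show ?thesis
    using True by (simp add: fibonomial_lucas_def)
next
  case False
  then have "(a mod 3 + b mod 3) mod 3 = a mod 3 + b mod 3 - 3"
    by (simp add: le_mod_geq)
  moreover have "b mod 3 < 3"
    by simp
  ultimately have "(a mod 3 + b mod 3) mod 3 < a mod 3"
    using False by linarith
  then have "(a + b) mod 3 < a mod 3"
    by (simp only: mod_add_eq)
  with False show ?thesis
    by (simp add: fibonomial_lucas_def)
qed

lemma odd_fibonomial_iff: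
  "odd (fibonomial n k) \<longleftrightarrow> k mod 3 \<le> n mod 3 \<and> odd (n div 3 choose k div 3)"
proof (cases "k \<le> n")
  case True
  then have "odd (fibonomial n k) \<longleftrightarrow> odd (fibonomial_lucas k (n - k))"
    using cong_2_odd_iff[OF cong_fibonomial_pascal_lucas] by (simp add: fibonomial_eq_pascal)
  with True show ?thesis
    by (simp add: fibonomial_lucas_altdef)
next
  case False
  then have "n div 3 < k div 3 \<or> n mod 3 < k mod 3"
    using div_le_mono[of n k 3] div_mult_mod_eq[of n 3] div_mult_mod_eq[of k 3] by linarith
  with False show ?thesis
    by (auto simp: fibonomial_def binomial_eq_0)
qed

lemma fibonomial_le_2: "n \<le> 2 \<Longrightarrow> fibonomial n k = of_bool (k \<le> n)"
proof -
  assume "n \<le> 2"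
  then have "fibfact m = 1" if "m \<le> n" for m
    using that by (auto simp: fibfact_def le_Suc_eq numeral_2_eq_2 atLeastAtMostSuc_conv)
  then show ?thesis
    by (simp add: fibonomial_def)
qed

theorem mainTheorem4:
  fixes n k :: nat
  shows "fibonomial n k mod 2 =
         (\<Prod>i\<in>{i. F_digits n i \<noteq> 0 \<or> F_digits k i \<noteq> 0}.
            fibonomial (F_digits n i) (F_digits k i)) mod 2"
proof -
  define S where "S = {i. F_digits n i \<noteq> 0 \<or> F_digits k i \<noteq> 0}"
  have "finite S"
    unfolding S_def F_digits_eq_F_digit
    using F_digit_support[of n] F_digit_support[of k] by (simp add: finite_subset)
  have digit_le_2: "F_digits m i \<le> 2" for m i
    by (cases i) (simp_all add: F_digits_eq_F_digit)
  have "F_digits k i \<le> F_digits n i" if "i \<notin> S" for i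
    using that by (simp add: S_def)
  then have "odd (\<Prod>i\<in>S. fibonomial (F_digits n i) (F_digits k i)) \<longleftrightarrow>
      (\<forall>i. F_digits k i \<le> F_digits n i)"
    using \<open>finite S\<close> by (auto simp: even_prod_iff fibonomial_le_2 digit_le_2)
  also have "\<dots> \<longleftrightarrow> F_digit k 0 \<le> F_digit n 0 \<and> (\<forall>i. F_digit k (Suc i) \<le> F_digit n (Suc i))"
    unfolding F_digits_eq_F_digit by (metis not0_implies_Suc)
  also have "\<dots> \<longleftrightarrow> k mod 3 \<le> n mod 3 \<and> (\<forall>i. bit (k div 3) i \<longrightarrow> bit (n div 3) i)"
    by simp
  also have "\<dots> \<longleftrightarrow> odd (fibonomial n k)"
    by (simp add: odd_fibonomial_iff odd_binomial_iff)
  finally show ?thesis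
    unfolding S_def by (simp add: mod_2_eq_odd)
qed

end
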